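(* Let $X$ be a separable absolutely strongly star-Hurewicz space. If $Y$ is a closed and discrete subset of $X$, then $|Y|<\mathfrak{b}$.
   Context: All spaces are regular. $St(A,\mathcal{U})=\bigcup\{U\in\mathcal{U}:U\cap A\neq\emptyset\}$. $\mathfrak{b}$ is the bounding number. $X$ is absolutely strongly star-Hurewicz if for each sequence $(\mathcal{U}_n:n\in\omega)$ of open covers and each dense subset $D$ of $X$ there are finite sets $F_n\subseteq D$ ($n\in\omega$) such that every $x\in X$ lies in $St(F_n,\mathcal{U}_n)$ for all but finitely many $n$. *)

theory Defs
  imports "HOL-Analysis.Analysis"
begin

definition star_of :: "'a set \<Rightarrow> 'a set set \<Rightarrow> 'a set" where
  "star_of A \<U> = \<Union>{U \<in> \<U>. U \<inter> A \<noteq> {}}"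

definition open_cover :: "'a topology \<Rightarrow> 'a set set \<Rightarrow> bool" where
  "open_cover X \<U> \<longleftrightarrow> (\<forall>U\<in>\<U>. openin X U) \<and> \<Union>\<U> = topspace X"

definition dense_in :: "'a topology \<Rightarrow> 'a set \<Rightarrow> bool" where
  "dense_in X D \<longleftrightarrow> D \<subseteq> topspace X \<and> X closure_of D = topspace X"

definition absolutely_strongly_star_Hurewicz :: "'a topology \<Rightarrow> bool" where
  "absolutely_strongly_star_Hurewicz X \<longleftrightarrow>
     (\<forall>\<U> :: nat \<Rightarrow> 'a set set. \<forall>D.
        (\<forall>n. open_cover X (\<U> n)) \<and> dense_in X D \<longrightarrow>
        (\<exists>F :: nat \<Rightarrow> 'a set. (\<forall>n. finite (F n) \<and> F n \<subseteq> D) \<and>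
           (\<forall>x\<in>topspace X. \<forall>\<^sub>F n in sequentially. x \<in> star_of (F n) (\<U> n))))"

definition le_star :: "(nat \<Rightarrow> nat) \<Rightarrow> (nat \<Rightarrow> nat) \<Rightarrow> bool" where
  "le_star f g \<longleftrightarrow> (\<forall>\<^sub>F n in sequentially. f n \<le> g n)"

definition unbounded_family :: "(nat \<Rightarrow> nat) set \<Rightarrow> bool" where
  "unbounded_family F \<longleftrightarrow> \<not> (\<exists>g. \<forall>f\<in>F. le_star f g)"

text \<open>\<open>|Y| < \<mathfrak>b\<close>: \<open>\<mathfrak>b\<close> is the least cardinality of an unbounded family,
  so \<open>|Y| < \<mathfrak>b\<close> means \<open>|Y|\<close> is strictly below the cardinality of every
  unbounded family.\<close>
definition card_less_bounding :: "'a set \<Rightarrow> bool" where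
  "card_less_bounding Y \<longleftrightarrow> (\<forall>F. unbounded_family F \<longrightarrow> (card_of Y, card_of F) \<in> ordLess)"

end

theory Submission
  imports Defs
begin

text \<open>Suppose an unbounded family \<open>F \<subseteq> \<omega>\<^sup>\<omega>\<close> injects into \<open>Y\<close>. The members sent into the countable
  dense set \<open>D = {d 0, d 1, \<dots>}\<close> form a countable, hence bounded, family. For a member \<open>f\<close> sent
  to \<open>y \<notin> D\<close>, regularity and discreteness of \<open>Y\<close> give at stage \<open>n\<close> an open set meeting \<open>Y\<close> only
  in \<open>y\<close> and missing \<open>d 0, \<dots>, d (f n)\<close>; together with \<open>X - Y\<close> these form open covers. The finite
  sets \<open>F\<^sub>n \<subseteq> D\<close> provided by the star-Hurewicz property then reach past index \<open>f n\<close> for almost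
  all \<open>n\<close>, so any \<open>g\<close> with \<open>F\<^sub>n \<subseteq> {d 0, \<dots>, d (g n)}\<close> bounds every such \<open>f\<close>.\<close>

definition bounded_family :: "(nat \<Rightarrow> nat) set \<Rightarrow> bool" where
  "bounded_family F \<longleftrightarrow> (\<exists>g. \<forall>f\<in>F. le_star f g)"

lemma unbounded_family_iff_not_bounded: "unbounded_family F \<longleftrightarrow> \<not> bounded_family F"
  by (simp add: unbounded_family_def bounded_family_def)

lemma bounded_family_subset: "bounded_family G \<Longrightarrow> F \<subseteq> G \<Longrightarrow> bounded_family F"
  unfolding bounded_family_def by blast

lemma bounded_family_Un:
  assumes "bounded_family F" and "bounded_family G"
  shows "bounded_family (F \<union> G)"
proof -
  obtain g1 g2 where "\<forall>f\<in>F. le_star f g1" and "\<forall>f\<in>G. le_star f g2"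
    using assms unfolding bounded_family_def by blast
  then have "\<forall>f\<in>F \<union> G. le_star f (\<lambda>n. g1 n + g2 n)"
    unfolding le_star_def by (fastforce elim: eventually_mono)
  then show ?thesis unfolding bounded_family_def by blast
qed

lemma countable_imp_bounded_family:
  assumes "countable F"
  shows "bounded_family F"
proof (cases "F = {}")
  case True
  then show ?thesis by (simp add: bounded_family_def)
next
  case False
  define e where "e = from_nat_into F"
  have range_e: "range e = F"
    using False assms by (simp add: e_def range_from_nat_into)
  have "le_star (e k) (\<lambda>n. \<Sum>j\<le>n. e j n)" for k
    unfolding le_star_def eventually_sequentially by (auto intro!: member_le_sum)
  then show ?thesis
    unfolding bounded_family_def using range_e by blast
qed

lemma bounded_family_inj_on_split_countable:
  assumes "inj_on h F" and "countable D" and "bounded_family (inv_into F h ` (h ` F - D))"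
  shows "bounded_family F"
proof -
  define F_in where "F_in = {f \<in> F. h f \<in> D}"
  have "countable F_in"
  proof (rule countable_image_inj_on)
    show "countable (h ` F_in)"
      using \<open>countable D\<close> by (rule countable_subset[rotated]) (auto simp: F_in_def)
    show "inj_on h F_in"
      using assms(1) by (rule inj_on_subset) (auto simp: F_in_def)
  qed
  have "f \<in> inv_into F h ` (h ` F - D)" if "f \<in> F" and "h f \<notin> D" for f
    using that assms(1) by (metis DiffI image_eqI inv_into_f_f)
  then have "F \<subseteq> F_in \<union> inv_into F h ` (h ` F - D)"
    by (auto simp: F_in_def)
  moreover have "bounded_family (F_in \<union> inv_into F h ` (h ` F - D))"
    using countable_imp_bounded_family[OF \<open>countable F_in\<close>] assms(3) by (rule bounded_family_Un)
  ultimately show ?thesis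
    by (rule bounded_family_subset[rotated])
qed

lemma finite_subset_range_imp_subset_image_atMost:
  fixes d :: "nat \<Rightarrow> 'a"
  assumes "finite A" and "A \<subseteq> range d"
  shows "\<exists>m. A \<subseteq> d ` {..m}"
  using assms
proof (induction A rule: finite_induct)
  case empty
  then show ?case by auto
next
  case (insert x A)
  then obtain m j where "A \<subseteq> d ` {..m}" and "x = d j"
    by auto
  then have "insert x A \<subseteq> d ` {..max m j}"
    by auto
  then show ?case by blast
qed

lemma closure_of_singleton_in_closed_discrete:
  assumes "closedin X Y" and "subtopology X Y = discrete_topology Y" and "y \<in> Y"
  shows "X closure_of {y} = {y}"
proof -
  have "X closure_of {y} \<subseteq> Y"
    using assms by (simp add: closure_of_minimal)
  moreover have "Y \<inter> X closure_of {y} = {y}"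
    using closure_of_subtopology[of X Y "{y}"] assms(2,3)
    by (simp add: discrete_topology_closure_of Int_absorb1)
  ultimately show ?thesis by blast
qed

lemma regular_space_separate_point_finite:
  assumes "regular_space X" and "X closure_of {y} = {y}" and "finite K" and "y \<notin> K"
  shows "\<exists>V. openin X V \<and> y \<in> V \<and> V \<inter> K = {}"
  using assms(3,4)
proof (induction K rule: finite_induct)
  case empty
  have "y \<in> topspace X"
    using assms(2) closure_of_subset_topspace by fastforce
  then show ?case by blast
next
  case (insert k K)
  then obtain V where V: "openin X V" "y \<in> V" "V \<inter> K = {}"
    by blast
  show ?case
  proof (cases "k \<in> topspace X")
    case False
    then show ?thesis
      using V openin_subset by blast
  next
    case True
    with insert.prems assms(2) have "k \<in> topspace X - X closure_of {y}"
      by auto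
    then obtain U' V' where
      "openin X U'" "openin X V'" "k \<in> U'" "X closure_of {y} \<subseteq> V'" "disjnt U' V'"
      using assms(1) unfolding regular_space_def by (meson closedin_closure_of)
    then have "openin X (V \<inter> V') \<and> y \<in> V \<inter> V' \<and> (V \<inter> V') \<inter> insert k K = {}"
      using V assms(2) by (auto simp: disjnt_iff)
    then show ?thesis by blast
  qed
qed

lemma discrete_subtopology_isolating_open:
  assumes "subtopology X Y = discrete_topology Y" and "y \<in> Y"
  shows "\<exists>U. openin X U \<and> U \<inter> Y = {y}"
proof -
  have "openin (subtopology X Y) {y}"
    using assms by simp
  then show ?thesis
    unfolding openin_subtopology by auto
qed

lemma star_of_isolating_cover:
  assumes "y \<in> Y" and "\<And>z. z \<in> Y \<Longrightarrow> N z \<inter> Y = {z}"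
    and "y \<in> star_of A (insert (S - Y) (N ` Y))"
  shows "N y \<inter> A \<noteq> {}"
proof -
  obtain C where C: "C \<in> insert (S - Y) (N ` Y)" "C \<inter> A \<noteq> {}" "y \<in> C"
    using assms(3) unfolding star_of_def by auto
  have "C \<noteq> S - Y"
    using C(3) assms(1) by auto
  then obtain z where "z \<in> Y" and "C = N z"
    using C(1) by auto
  moreover have "y \<in> N z \<inter> Y"
    using C(3) assms(1) \<open>C = N z\<close> by simp
  ultimately have "C = N y"
    using assms(2)[OF \<open>z \<in> Y\<close>] by simp
  with C(2) show ?thesis
    by simp
qed

text \<open>At stage \<open>n\<close> the only cover member containing \<open>y \<in> Y\<^sub>0\<close> is a neighbourhood of \<open>y\<close>
  missing \<open>d 0, \<dots>, d (\<phi> y n)\<close>, so the finite set catching \<open>y\<close> has to reach past index \<open>\<phi> y n\<close>.\<close>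
lemma absolutely_strongly_star_Hurewicz_bounds_family:
  fixes d :: "nat \<Rightarrow> 'a" and \<phi> :: "'a \<Rightarrow> nat \<Rightarrow> nat"
  assumes ASSH: "absolutely_strongly_star_Hurewicz X"
    and dense: "dense_in X (range d)"
    and closed: "closedin X Y"
    and isolating: "\<forall>y\<in>Y. \<exists>U. openin X U \<and> U \<inter> Y = {y}"
    and "Y0 \<subseteq> Y"
    and avoiding: "\<forall>y\<in>Y0. \<forall>m. \<exists>V. openin X V \<and> V \<inter> Y = {y} \<and> V \<inter> d ` {..m} = {}"
  shows "bounded_family (\<phi> ` Y0)"
proof -
  obtain U where U: "\<And>y. y \<in> Y \<Longrightarrow> openin X (U y) \<and> U y \<inter> Y = {y}"
    using bchoice[OF isolating] by blast
  obtain V where V: "\<And>y m. y \<in> Y0 \<Longrightarrow>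
      openin X (V y m) \<and> V y m \<inter> Y = {y} \<and> V y m \<inter> d ` {..m} = {}"
    using bchoice[OF avoiding[unfolded choice_iff]] by blast
  define N where "N n y = (if y \<in> Y0 then V y (\<phi> y n) else U y)" for n y
  have N: "openin X (N n y) \<and> N n y \<inter> Y = {y}" if "y \<in> Y" for n y
    using U V that by (simp add: N_def)
  define Cov where "Cov n = insert (topspace X - Y) (N n ` Y)" for n
  have cover: "open_cover X (Cov n)" for n
  proof -
    have "\<forall>C\<in>Cov n. openin X C"
      using N closed by (auto simp: Cov_def closedin_def)
    moreover have "x \<in> \<Union>(Cov n)" if "x \<in> topspace X" for x
    proof (cases "x \<in> Y")
      case True
      then have "x \<in> N n x" and "N n x \<in> Cov n"
        using N[of x n] by (auto simp: Cov_def)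
      then show ?thesis by blast
    next
      case False
      with that show ?thesis by (auto simp: Cov_def)
    qed
    ultimately show ?thesis
      unfolding open_cover_def by (auto dest: openin_subset)
  qed
  obtain Fs where Fs: "\<And>n. finite (Fs n) \<and> Fs n \<subseteq> range d"
    and star: "\<And>x. x \<in> topspace X \<Longrightarrow> \<forall>\<^sub>F n in sequentially. x \<in> star_of (Fs n) (Cov n)"
    using ASSH[unfolded absolutely_strongly_star_Hurewicz_def, rule_format, of Cov "range d"]
      cover dense by blast
  have "\<exists>m. Fs n \<subseteq> d ` {..m}" for n
    using Fs[of n] by (intro finite_subset_range_imp_subset_image_atMost) simp_all
  then obtain g where g: "\<And>n. Fs n \<subseteq> d ` {..g n}"
    by metis
  have "le_star (\<phi> y) g" if "y \<in> Y0" for y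
  proof -
    have "y \<in> Y" "y \<in> topspace X"
      using that \<open>Y0 \<subseteq> Y\<close> closedin_subset[OF closed] by auto
    have "\<phi> y n \<le> g n" if "y \<in> star_of (Fs n) (Cov n)" for n
    proof -
      have "N n y \<inter> Fs n \<noteq> {}"
      proof (rule star_of_isolating_cover[where Y = Y and S = "topspace X"])
        show "y \<in> star_of (Fs n) (insert (topspace X - Y) (N n ` Y))"
          using that by (simp add: Cov_def)
      qed (simp_all add: \<open>y \<in> Y\<close> N)
      then obtain x where x: "x \<in> V y (\<phi> y n)" "x \<in> Fs n"
        using \<open>y \<in> Y0\<close> by (auto simp: N_def)
      then obtain i where "i \<le> g n" and "x = d i"
        using g by blast
      have "V y (\<phi> y n) \<inter> d ` {..\<phi> y n} = {}"
        using V[OF \<open>y \<in> Y0\<close>] by simp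
      with x(1) \<open>x = d i\<close> have "\<not> i \<le> \<phi> y n"
        by auto
      with \<open>i \<le> g n\<close> show ?thesis
        by linarith
    qed
    then show ?thesis
      unfolding le_star_def by (rule eventually_mono[OF star[OF \<open>y \<in> topspace X\<close>]])
  qed
  then show ?thesis
    unfolding bounded_family_def by blast
qed

lemma absolutely_strongly_star_Hurewicz_bounds_family_outside_dense:
  fixes \<phi> :: "'a \<Rightarrow> nat \<Rightarrow> nat"
  assumes regular: "regular_space X"
    and ASSH: "absolutely_strongly_star_Hurewicz X"
    and "countable D" and dense: "dense_in X D"
    and closed: "closedin X Y" and discrete: "subtopology X Y = discrete_topology Y"
    and Y0: "Y0 \<subseteq> Y - D"
  shows "bounded_family (\<phi> ` Y0)"
proof (cases "Y0 = {}")
  case True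
  then show ?thesis
    by (simp add: bounded_family_def)
next
  case False
  then have "topspace X \<noteq> {}"
    using Y0 closedin_subset[OF closed] by blast
  then have "D \<noteq> {}"
    using dense closure_of_empty unfolding dense_in_def by metis
  define d where "d = from_nat_into D"
  have range_d: "range d = D"
    using \<open>D \<noteq> {}\<close> \<open>countable D\<close> by (simp add: d_def range_from_nat_into)
  have isolating: "\<forall>y\<in>Y. \<exists>U. openin X U \<and> U \<inter> Y = {y}"
    using discrete_subtopology_isolating_open[OF discrete] by blast
  have avoiding: "\<exists>V. openin X V \<and> V \<inter> Y = {y} \<and> V \<inter> d ` {..m} = {}" if "y \<in> Y0" for y m
  proof -
    have "y \<in> Y" and "y \<notin> d ` {..m}"
      using that Y0 range_d by auto
    obtain U where U: "openin X U" "U \<inter> Y = {y}"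
      using isolating \<open>y \<in> Y\<close> by blast
    obtain W where W: "openin X W" "y \<in> W" "W \<inter> d ` {..m} = {}"
      using regular_space_separate_point_finite[OF regular
          closure_of_singleton_in_closed_discrete[OF closed discrete \<open>y \<in> Y\<close>]]
        \<open>y \<notin> d ` {..m}\<close> by blast
    have "openin X (U \<inter> W) \<and> (U \<inter> W) \<inter> Y = {y} \<and> (U \<inter> W) \<inter> d ` {..m} = {}"
      using U W by auto
    then show ?thesis by blast
  qed
  show ?thesis
  proof (rule absolutely_strongly_star_Hurewicz_bounds_family[OF ASSH _ closed isolating])
    show "dense_in X (range d)"
      using dense range_d by simp
    show "Y0 \<subseteq> Y"
      using Y0 by blast
  qed (use avoiding in blast)
qed

theorem mainTheorem11:
  fixes X :: "'a topology" and Y :: "'a set"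
  assumes "regular_space X"
    and "separable_space X"
    and "absolutely_strongly_star_Hurewicz X"
    and "closedin X Y"
    and "subtopology X Y = discrete_topology Y"
  shows "card_less_bounding Y"
  unfolding card_less_bounding_def
proof (intro allI impI)
  fix F :: "(nat \<Rightarrow> nat) set"
  assume "unbounded_family F"
  obtain D where "countable D" and "dense_in X D"
    using assms(2) unfolding separable_space_def dense_in_def by blast
  show "(card_of Y, card_of F) \<in> ordLess"
  proof (rule ccontr)
    assume "(card_of Y, card_of F) \<notin> ordLess"
    then have "(card_of F, card_of Y) \<in> ordLeq"
      using not_ordLess_iff_ordLeq[OF card_of_Well_order card_of_Well_order] by blast
    then obtain h where h: "inj_on h F" "h ` F \<subseteq> Y"
      unfolding card_of_ordLeq[symmetric] by blast
    have "bounded_family (inv_into F h ` (h ` F - D))"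
      using h(2) by (intro absolutely_strongly_star_Hurewicz_bounds_family_outside_dense[OF
          assms(1,3) \<open>countable D\<close> \<open>dense_in X D\<close> assms(4,5)]) auto
    with h(1) \<open>countable D\<close> have "bounded_family F"
      by (rule bounded_family_inj_on_split_countable)
    then show False
      using \<open>unbounded_family F\<close> by (simp add: unbounded_family_iff_not_bounded)
  qed
qed

end
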